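(* (Advantage of the fewer.) Fix $M$, $p$, $q$, $\mu$ as in the context, take attention bias $\alpha=1$ and a preference for like-minded news $\gamma$ with $0<\gamma<1$, and use the limit interim efficiencies $\mathcal P_L$ defined in the context (uniform initial ranking, $N,\kappa\to\infty$). For $j\in\{0,1,\dots,M\}$ let $$Q^{\mathrm{corr}}(j)=\mathcal P_j,\qquad Q^{\mathrm{inc}}(j)=1-\mathcal P_{M-j},$$ which are, respectively, the limit total probability that a searcher clicks on one of the websites in a set $J$ of $j$ websites all carrying the correct signal, or all carrying the incorrect signal (the remaining $M-j$ websites carrying the other signal). Then for every $j\in\{1,2,\dots,M-2\}$ with $j\neq \frac{M-1}{2}$, $$Q^{\mathrm{corr}}(j+1)\le Q^{\mathrm{corr}}(j)\quad\text{and}\quad Q^{\mathrm{inc}}(j+1)\le Q^{\mathrm{inc}}(j),$$ i.e. the limit total clicking probability on all websites carrying a fixed signal is (weakly) decreasing in the number $\#J$ of such websites whenever $\#J\notin\{0,\frac{M-1}{2},M-1\}$.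
   Context: Model. There are $M$ websites ($M\ge 3$ odd) and a binary state $\omega$. Each website carries a fixed signal $y_m\in\{0,1\}$; $L\in\{0,\dots,M\}$ denotes the number of websites whose signal is correct ($y_m=\omega$). The set of websites carrying the signal held by a strict majority of websites is $K$. Parameters: $p\in(\tfrac12,1)$ (accuracy of a searcher's private signal $x_n$ about $\omega$), $q\in(\tfrac12,1)$ (accuracy of each website's signal), $\mu\in(\tfrac12,1]$ (accuracy of a searcher's signal $z_n$ about the website-majority signal), with $\mu q>p$; $\gamma\in[0,1]$ (preference for like-minded news); $\alpha\ge 0$ (attention bias; the baseline model has $\alpha=1$). Searchers arrive one at a time; a searcher with signals $(x_n,z_n)$ facing ranking $r\in\Delta(M)$ clicks website $m$ with probability $\rho_m=r_m^\alpha v^*_m/\sum_{m'}r_{m'}^\alpha v^*_{m'}$, where $v^*_m$ equals $1/[m]$ if $y_m=x_n=z_n$, $\gamma/[m]$ if $y_m=x_n\ne z_n$, $(1-\gamma)/[m]$ if $y_m=z_n\neq x_n$, and $0$ otherwise, with $[m]$ the number of websites carrying the same signal as $m$. The popularity ranking is updated by $r_{t,m}=\frac{\kappa}{\kappa+1}r_{t-1,m}+\frac{1}{\kappa+1}\rho_{t-1,m}$. Reduced limit dynamics (operative definitions). Call $L$ a minority if $1\le L\le\frac{M-1}{2}$ and a majority if $\frac{M+1}{2}\le L\le M-1$. Writing $u=(x/L)^\alpha$, $w=((1-x)/(M-L))^\alpha$, define for $x\in[0,1]$ $$\theta_L(x)=p(1-\mu)+\frac{p\mu\gamma u}{\gamma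 u+(1-\gamma)w}+\frac{(1-p)(1-\mu)(1-\gamma)u}{(1-\gamma)u+\gamma w}\quad\text{($L$ minority)},$$ $$\theta_L(x)=p\mu+\frac{p(1-\mu)\gamma u}{\gamma u+(1-\gamma)w}+\frac{(1-p)\mu(1-\gamma)u}{(1-\gamma)u+\gamma w}\quad\text{($L$ majority)}.$$ $\theta_L(x)$ is the expected total probability that a searcher clicks a correct-signal website when the total ranking mass on the $L$ correct-signal websites is $x$, spread evenly among them. The limit interim efficiency (limit probability, as the number of searchers $N$ and persistence $\kappa$ go to infinity, in the mean-dynamics approximation, that a searcher clicks a correct-signal website, starting from the uniform initial ranking) is $\mathcal P_L=\lim_{t\to\infty}X(t)$, where $X$ solves $\dot X=\theta_L(X)-X$, $X(0)=L/M$; and $\mathcal P_0=0$, $\mathcal P_M=1$. Note $\theta_L(\mathcal P_L)=\mathcal P_L$ for $1\le L\le M-1$. *)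

theory Defs
  imports "HOL-Analysis.Analysis"
begin

text \<open>Reduced limit dynamics. theta M p mu gamma alpha L x is the expected total probability
  that a searcher clicks a correct-signal website when the ranking mass on the L
  correct-signal websites is x (spread evenly).  L is a minority iff 1 \<le> L and 2 L \<le> M - 1,
  a majority iff M + 1 \<le> 2 L and L \<le> M - 1.\<close>

definition theta :: "nat \<Rightarrow> real \<Rightarrow> real \<Rightarrow> real \<Rightarrow> real \<Rightarrow> nat \<Rightarrow> real \<Rightarrow> real" where
  "theta M p mu gamma alpha L x =
     (let u = (x / real L) powr alpha;
          w = ((1 - x) / real (M - L)) powr alpha
      in if 2 * L < M then
           p * (1 - mu) + p * mu * gamma * u / (gamma * u + (1 - gamma) * w)
             + (1 - p) * (1 - mu) * (1 - gamma) * u / ((1 - gamma) * u + gamma * w)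
         else
           p * mu + p * (1 - mu) * gamma * u / (gamma * u + (1 - gamma) * w)
             + (1 - p) * mu * (1 - gamma) * u / ((1 - gamma) * u + gamma * w))"

definition mean_dyn_solution ::
  "nat \<Rightarrow> real \<Rightarrow> real \<Rightarrow> real \<Rightarrow> real \<Rightarrow> nat \<Rightarrow> (real \<Rightarrow> real) \<Rightarrow> bool" where
  "mean_dyn_solution M p mu gamma alpha L X \<longleftrightarrow>
     X 0 = real L / real M \<and>
     (\<forall>t\<ge>0. (X has_real_derivative (theta M p mu gamma alpha L (X t) - X t))
               (at t within {0..}))"

definition interim_eff :: "nat \<Rightarrow> (nat \<Rightarrow> real) \<Rightarrow> nat \<Rightarrow> real" where
  "interim_eff M Plim L = (if L = 0 then 0 else if L = M then 1 else Plim L)"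

end

theory Submission
  imports Defs
begin

text \<open>For \<open>\<alpha> = 1\<close> the rate \<open>\<theta>\<^sub>L\<close> has the form \<open>A + B s\<^sub>\<gamma> + C s\<^sub>1\<^sub>-\<^sub>\<gamma>\<close> with
  \<open>s\<^sub>c = c u / (c u + (1 - c) w)\<close>, where \<open>u = x/L\<close> and \<open>w = (1 - x)/(M - L)\<close> are the ranking
  masses per correct and per incorrect website.  Since \<open>s\<^sub>c \<ge> c\<close> exactly when \<open>u \<ge> w\<close>,
  \<open>\<theta>\<^sub>L(x)\<close> lies above \<open>c\<^sub>0 = A + B \<gamma> + C (1 - \<gamma>)\<close> exactly when \<open>x \<ge> L/M\<close>; and for
  fixed \<open>x\<close>, \<open>\<theta>\<^sub>L(x)\<close> strictly decreases when \<open>L\<close> grows without leaving the minority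
  or the majority regime, because \<open>u\<close> drops and \<open>w\<close> rises.  The limit \<open>\<P>\<^sub>L\<close> is a fixed
  point of \<open>\<theta>\<^sub>L\<close> that the one-dimensional dynamics started at \<open>L/M\<close> cannot reach across
  a barrier: it stays below every \<open>b \<ge> L/M\<close> with \<open>\<theta>\<^sub>L(b) < b\<close> and above every
  \<open>b \<le> L/M\<close> with \<open>\<theta>\<^sub>L(b) > b\<close>.  Placing the fixed points of \<open>\<theta>\<^sub>L\<close> and \<open>\<theta>\<^sub>L\<^sub>+\<^sub>1\<close>
  relative to \<open>L/M\<close>, \<open>(L + 1)/M\<close> and \<open>c\<^sub>0\<close> rules out \<open>\<P>\<^sub>L < \<P>\<^sub>L\<^sub>+\<^sub>1\<close>.  The claim for
  the incorrect signal is the same monotonicity at \<open>M - j - 1\<close>.\<close>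

lemma weighted_sum_pos:
  fixes c d u w :: real
  assumes "0 < c" "0 < d" "0 \<le> u" "0 \<le> w" "0 < u + w"
  shows "0 < c * u + d * w"
  using assms by (cases "u = 0") (auto intro: add_pos_nonneg add_nonneg_pos)

definition odds_share :: "real \<Rightarrow> real \<Rightarrow> real \<Rightarrow> real \<Rightarrow> real" where
  "odds_share c d u w = c * u / (c * u + d * w)"

lemma odds_share_bounds:
  assumes "0 < c" "0 < d" "0 \<le> u" "0 \<le> w" "0 < u + w"
  shows "0 \<le> odds_share c d u w" "odds_share c d u w \<le> 1"
proof -
  have "0 < c * u + d * w" using weighted_sum_pos assms by blast
  then show "0 \<le> odds_share c d u w" "odds_share c d u w \<le> 1"
    using assms by (auto simp: odds_share_def divide_simps)
qed

lemma odds_share_diag: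
  assumes "c + d = 1" "u \<noteq> 0"
  shows "odds_share c d u u = c"
proof -
  have "c * u + d * u = u" using assms(1) by (metis distrib_right mult_1)
  then show ?thesis using assms(2) by (simp add: odds_share_def)
qed

lemma odds_share_ge_weight_iff:
  assumes "0 < c" "0 < d" "c + d = 1" "0 \<le> u" "0 \<le> w" "0 < u + w"
  shows "c \<le> odds_share c d u w \<longleftrightarrow> w \<le> u"
proof -
  have pos: "0 < c * u + d * w" using weighted_sum_pos assms by blast
  have d: "d = 1 - c" using assms(3) by simp
  have gap: "c * u - c * (c * u + d * w) = c * d * (u - w)"
    by (simp add: d algebra_simps)
  have "c \<le> odds_share c d u w \<longleftrightarrow> c * (c * u + d * w) \<le> c * u"
    using pos by (simp add: odds_share_def le_divide_eq)
  also have "\<dots> \<longleftrightarrow> 0 \<le> c * d * (u - w)"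
    using gap by linarith
  also have "\<dots> \<longleftrightarrow> w \<le> u"
    using mult_pos_pos[OF assms(1,2)] by (simp add: zero_le_mult_iff[of "c * d"])
  finally show ?thesis .
qed

lemma odds_share_strict_mono:
  assumes "0 < c" "0 < d" "0 < u'" "u' \<le> u" "0 < w" "w \<le> w'" "u' < u \<or> w < w'"
  shows "odds_share c d u' w' < odds_share c d u w"
proof -
  have "u' * w < u * w'"
    using assms by (smt (verit) mult_right_mono mult_left_mono mult_strict_left_mono
        mult_strict_right_mono)
  then have "c * d * (u' * w) < c * d * (u * w')" using assms by simp
  then have "c * u' * (c * u + d * w) < c * u * (c * u' + d * w')" by (simp add: algebra_simps)
  moreover have "0 < c * u' + d * w'" "0 < c * u + d * w" using assms by (simp_all add: add_pos_pos)
  ultimately show ?thesis by (simp add: odds_share_def divide_simps)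
qed

text \<open>The absolute values make the rate continuous on all of \<open>\<real>\<close>; they agree with
  \<open>theta\<close> at \<open>\<alpha> = 1\<close> because \<open>x powr 1 = \<bar>x\<bar>\<close>.\<close>

definition click_rate :: "real \<Rightarrow> real \<Rightarrow> real \<Rightarrow> real \<Rightarrow> nat \<Rightarrow> nat \<Rightarrow> real \<Rightarrow> real" where
  "click_rate A B C g N K x =
     (let u = \<bar>x / real K\<bar>; w = \<bar>(1 - x) / real (N - K)\<bar>
      in A + B * odds_share g (1 - g) u w + C * odds_share (1 - g) g u w)"

lemma theta_alpha_one:
  "theta M p mu g 1 L x =
     (let s = if 2 * L < M then 1 - mu else mu
      in click_rate (p * s) (p * (1 - s)) ((1 - p) * s) g M L x)"
  by (simp add: theta_def click_rate_def odds_share_def Let_def mult.assoc)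

lemma ranking_masses_pos:
  assumes "1 \<le> K" "K < N"
  shows "0 < \<bar>x / real K\<bar> + \<bar>(1 - x) / real (N - K)\<bar>"
  using assms by (cases "x = 0") (auto simp: add_pos_nonneg)

lemma ranking_masses_le_iff:
  assumes "1 \<le> K" "K < N" "0 \<le> x" "x \<le> 1"
  shows "\<bar>(1 - x) / real (N - K)\<bar> \<le> \<bar>x / real K\<bar> \<longleftrightarrow> real K / real N \<le> x"
proof -
  have pos: "0 < real K" "0 < real (N - K)" "real (N - K) = real N - real K"
    using assms by auto
  have "\<bar>(1 - x) / real (N - K)\<bar> \<le> \<bar>x / real K\<bar> \<longleftrightarrow> (1 - x) * real K \<le> x * (real N - real K)"
    using assms pos by (simp add: divide_simps)
  also have "\<dots> \<longleftrightarrow> real K / real N \<le> x"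
    using pos by (simp add: field_simps)
  finally show ?thesis .
qed

lemma autonomous_ode_upper_barrier:
  fixes X G :: "real \<Rightarrow> real"
  assumes ode: "\<And>t. t \<ge> 0 \<Longrightarrow> (X has_real_derivative G (X t)) (at t within {0..})"
    and X0: "X 0 \<le> b" and Gb: "G b < 0" and t: "t \<ge> 0"
  shows "X t \<le> b"
proof (rule ccontr)
  assume "\<not> X t \<le> b"
  then have Xt: "b < X t" by simp
  have "continuous_on {0..} X"
    by (rule DERIV_continuous_on) (use ode in auto)
  then have cont: "continuous_on {0..t} X"
    by (rule continuous_on_subset) auto
  define Z where "Z = {s \<in> {0..t}. X s \<le> b}"
  have "closed Z" unfolding Z_def
    by (intro continuous_on_closed_Collect_le[OF cont continuous_on_const] closed_atLeastAtMost)
  moreover have "0 \<in> Z" "bdd_above Z"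
    using X0 t by (auto simp: Z_def intro: bdd_aboveI[where M = t])
  ultimately have s0Z: "Sup Z \<in> Z" and upper: "\<And>s. s \<in> Z \<Longrightarrow> s \<le> Sup Z"
    by (auto intro: closed_contains_Sup cSup_upper)
  define s0 where "s0 = Sup Z"
  have s0: "0 \<le> s0" "s0 < t" "X s0 \<le> b"
    using s0Z Xt by (auto simp: Z_def s0_def less_le)
  \<comment> \<open>\<open>s0\<close> is the last time at most \<open>b\<close>, so \<open>X\<close> crosses \<open>b\<close> upwards there, against \<open>G b < 0\<close>.\<close>
  obtain c where c: "s0 \<le> c" "c \<le> t" "X c = b"
    using IVT'[of X s0 b t] s0 Xt continuous_on_subset[OF cont, of "{s0..t}"] by auto
  then have "X s0 = b" using upper[of c] s0 by (force simp: Z_def s0_def)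
  then have "(X has_real_derivative G b) (at s0 within {0..})" using ode[OF s0(1)] by simp
  from has_real_derivative_neg_dec_right[OF this Gb] obtain e where
    e: "0 < e" "\<And>h. 0 < h \<Longrightarrow> s0 + h \<in> {0..} \<Longrightarrow> h < e \<Longrightarrow> X (s0 + h) < X s0"
    by blast
  define h where "h = min (e / 2) (t - s0)"
  have h: "0 < h" "h < e" "s0 + h \<le> t" using e s0 by (auto simp: h_def)
  then have "s0 + h \<in> Z" using e(2)[OF h(1) _ h(2)] s0 \<open>X s0 = b\<close> by (auto simp: Z_def)
  then show False using upper h by (force simp: s0_def)
qed

lemma autonomous_ode_lower_barrier:
  fixes X G :: "real \<Rightarrow> real"
  assumes ode: "\<And>t. t \<ge> 0 \<Longrightarrow> (X has_real_derivative G (X t)) (at t within {0..})"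
    and X0: "b \<le> X 0" and Gb: "0 < G b" and t: "t \<ge> 0"
  shows "b \<le> X t"
proof -
  have "(\<lambda>s. - X s) t \<le> - b"
    by (rule autonomous_ode_upper_barrier[where G = "\<lambda>y. - G (- y)"])
      (use DERIV_minus[OF ode] X0 Gb t in auto)
  then show ?thesis by simp
qed

lemma convergent_with_convergent_derivative_limit_zero:
  fixes X D :: "real \<Rightarrow> real"
  assumes deriv: "\<And>t. t \<ge> 0 \<Longrightarrow> (X has_real_derivative D t) (at t within {0..})"
    and X: "(X \<longlongrightarrow> P) at_top" and D: "(D \<longlongrightarrow> d) at_top"
  shows "d = 0"
proof (rule ccontr)
  assume "d \<noteq> 0"
  define e where "e = \<bar>d\<bar> / 2"
  have "0 < e" using \<open>d \<noteq> 0\<close> by (simp add: e_def)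
  have "\<forall>\<^sub>F t in at_top. dist (D t) d < e \<and> dist (X t) P < e / 2 \<and> t \<ge> (0::real)"
    using tendstoD[OF D \<open>0 < e\<close>] tendstoD[OF X half_gt_zero[OF \<open>0 < e\<close>]]
      eventually_ge_at_top[of "0::real"]
    by eventually_elim auto
  then obtain T where T: "\<And>t. t \<ge> T \<Longrightarrow> dist (D t) d < e \<and> dist (X t) P < e / 2 \<and> t \<ge> 0"
    by (auto simp: eventually_at_top_linorder)
  \<comment> \<open>On \<open>[T, T + 1]\<close> the increment of \<open>X\<close> is below \<open>e\<close>, while the mean value theorem
    makes it equal to a derivative value exceeding \<open>e\<close>.\<close>
  have "\<exists>x\<in>{T<..<T+1}. X (T+1) - X T = (\<lambda>h. D x * h) (T + 1 - T)"
  proof (rule mvt_simple)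
    fix x assume "T \<le> x" "x \<le> T + 1"
    then have "0 \<le> x" "{T..T+1} \<subseteq> {0..}" using T[of T] by auto
    then show "(X has_derivative (\<lambda>h. D x * h)) (at x within {T..T+1})"
      using has_field_derivative_subset[OF deriv] by (simp add: has_field_derivative_def)
  qed simp
  then obtain x where "T < x" and Dx: "D x = (X (T+1) - P) - (X T - P)" by auto
  have "\<bar>X (T+1) - P\<bar> < e / 2" "\<bar>X T - P\<bar> < e / 2" "\<bar>D x - d\<bar> < e"
    using T[of "T+1"] T[of T] T[of x] \<open>T < x\<close> by (auto simp: dist_real_def)
  moreover have "\<bar>D x\<bar> \<le> \<bar>X (T+1) - P\<bar> + \<bar>X T - P\<bar>"
    unfolding Dx by (rule abs_triangle_ineq4)
  moreover have "\<bar>d\<bar> \<le> \<bar>D x\<bar> + \<bar>D x - d\<bar>"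
    using abs_triangle_ineq4[of "D x" "D x - d"] by simp
  ultimately show False unfolding e_def by linarith
qed

lemma autonomous_ode_limit_equilibrium:
  fixes X G :: "real \<Rightarrow> real"
  assumes ode: "\<And>t. t \<ge> 0 \<Longrightarrow> (X has_real_derivative G (X t)) (at t within {0..})"
    and lim: "(X \<longlongrightarrow> P) at_top" and "isCont G P"
  shows "G P = 0"
  using convergent_with_convergent_derivative_limit_zero[OF ode lim]
    isCont_tendsto_compose[OF \<open>isCont G P\<close> lim] by blast

lemma affine_combination_strict_mono:
  fixes A B C x1 x2 y1 y2 :: real
  assumes "0 \<le> B" "0 \<le> C" "0 < B + C" "x1 < y1" "x2 < y2"
  shows "A + B * x1 + C * x2 < A + B * y1 + C * y2"
  using assms by (smt (verit) mult_left_mono mult_strict_left_mono)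

locale click_model =
  fixes A B C g :: real and N :: nat
  assumes nonneg: "0 \<le> A" "0 \<le> B" "0 \<le> C" and BC_pos: "0 < B + C"
    and sum_le_one: "A + B + C \<le> 1" and g: "0 < g" "g < 1"
begin

abbreviation rate :: "nat \<Rightarrow> real \<Rightarrow> real" where
  "rate K \<equiv> click_rate A B C g N K"

definition uniform_rate :: real where
  "uniform_rate = A + B * g + C * (1 - g)"

definition mean_dynamics :: "nat \<Rightarrow> (real \<Rightarrow> real) \<Rightarrow> bool" where
  "mean_dynamics K X \<longleftrightarrow> X 0 = real K / real N \<and>
     (\<forall>t\<ge>0. (X has_real_derivative rate K (X t) - X t) (at t within {0..}))"

lemma rate_bounds:
  assumes "1 \<le> K" "K < N"
  shows "A \<le> rate K x" "rate K x \<le> 1"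
proof -
  let ?u = "\<bar>x / real K\<bar>" and ?w = "\<bar>(1 - x) / real (N - K)\<bar>"
  have pos: "0 < ?u + ?w" using ranking_masses_pos[OF assms] .
  have s1: "0 \<le> odds_share g (1 - g) ?u ?w" "odds_share g (1 - g) ?u ?w \<le> 1"
    using odds_share_bounds[OF _ _ _ _ pos] g by auto
  have s2: "0 \<le> odds_share (1 - g) g ?u ?w" "odds_share (1 - g) g ?u ?w \<le> 1"
    using odds_share_bounds[OF _ _ _ _ pos] g by auto
  have "0 \<le> B * odds_share g (1 - g) ?u ?w" "B * odds_share g (1 - g) ?u ?w \<le> B"
    "0 \<le> C * odds_share (1 - g) g ?u ?w" "C * odds_share (1 - g) g ?u ?w \<le> C"
    using s1 s2 nonneg by (simp_all add: mult_left_le)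
  then show "A \<le> rate K x" "rate K x \<le> 1"
    using sum_le_one unfolding click_rate_def Let_def by linarith+
qed

lemma isCont_rate:
  assumes "1 \<le> K" "K < N"
  shows "isCont (rate K) x"
proof -
  have "continuous_on UNIV (rate K)"
    unfolding click_rate_def odds_share_def Let_def
  proof (intro continuous_intros ballI)
    fix y :: real
    note pos = ranking_masses_pos[OF assms, of y]
    show "g * \<bar>y / real K\<bar> + (1 - g) * \<bar>(1 - y) / real (N - K)\<bar> \<noteq> 0"
      "(1 - g) * \<bar>y / real K\<bar> + g * \<bar>(1 - y) / real (N - K)\<bar> \<noteq> 0"
      using weighted_sum_pos[OF _ _ _ _ pos] g by (metis abs_ge_zero diff_gt_0_iff_gt less_irrefl)+
  qed (use assms in auto)
  then show ?thesis by (simp add: continuous_on_eq_continuous_at)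
qed

lemma rate_uniform:
  assumes "1 \<le> K" "K < N"
  shows "rate K (real K / real N) = uniform_rate"
proof -
  have "\<bar>(real K / real N) / real K\<bar> = 1 / real N"
    "\<bar>(1 - real K / real N) / real (N - K)\<bar> = 1 / real N"
    using assms by (auto simp: divide_simps)
  then show ?thesis using assms by (simp add: click_rate_def uniform_rate_def odds_share_diag)
qed

lemma uniform_rate_le_rate_iff:
  assumes K: "1 \<le> K" "K < N" and x: "0 \<le> x" "x \<le> 1"
  shows "uniform_rate \<le> rate K x \<longleftrightarrow> real K / real N \<le> x"
proof -
  let ?u = "\<bar>x / real K\<bar>" and ?w = "\<bar>(1 - x) / real (N - K)\<bar>"
  have pos: "0 < ?u + ?w" using ranking_masses_pos[OF K] .
  have s1: "g \<le> odds_share g (1 - g) ?u ?w \<longleftrightarrow> ?w \<le> ?u"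
    using odds_share_ge_weight_iff[OF _ _ _ _ _ pos] g by simp
  have s2: "1 - g \<le> odds_share (1 - g) g ?u ?w \<longleftrightarrow> ?w \<le> ?u"
    using odds_share_ge_weight_iff[OF _ _ _ _ _ pos] g by simp
  have "uniform_rate \<le> rate K x \<longleftrightarrow> ?w \<le> ?u"
  proof (cases "?w \<le> ?u")
    case True
    then have "B * g \<le> B * odds_share g (1 - g) ?u ?w"
      "C * (1 - g) \<le> C * odds_share (1 - g) g ?u ?w"
      using s1 s2 nonneg by (simp_all add: mult_left_mono)
    then show ?thesis using True by (simp add: click_rate_def uniform_rate_def Let_def)
  next
    case False
    then have "rate K x < uniform_rate"
      using affine_combination_strict_mono[OF nonneg(2,3) BC_pos, of _ g _ "1 - g" A] s1 s2
      by (simp add: click_rate_def uniform_rate_def Let_def)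
    then show ?thesis using False by simp
  qed
  then show ?thesis using ranking_masses_le_iff[OF K x] by simp
qed

lemma rate_Suc_less:
  assumes "1 \<le> K" "K + 1 < N" "0 < x" "x < 1"
  shows "rate (K + 1) x < rate K x"
proof -
  define u u' w w' where "u = \<bar>x / real K\<bar>" and "u' = \<bar>x / real (K + 1)\<bar>"
    and "w = \<bar>(1 - x) / real (N - K)\<bar>" and "w' = \<bar>(1 - x) / real (N - (K + 1))\<bar>"
  have "0 < u'" "u' < u"
    using assms divide_strict_left_mono[of "real K" "real (K + 1)" x]
    by (simp_all add: u_def u'_def)
  moreover have "0 < w" "w < w'"
    using assms divide_strict_left_mono[of "real (N - (K + 1))" "real (N - K)" "1 - x"]
    by (simp_all add: w_def w'_def)
  ultimately have "odds_share g (1 - g) u' w' < odds_share g (1 - g) u w"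
    "odds_share (1 - g) g u' w' < odds_share (1 - g) g u w"
    using g by (auto intro: odds_share_strict_mono)
  from affine_combination_strict_mono[OF nonneg(2,3) BC_pos this, of A]
  show ?thesis by (simp add: click_rate_def Let_def u_def u'_def w_def w'_def)
qed

lemma mean_dynamics_limit:
  assumes K: "1 \<le> K" "K < N" and X: "mean_dynamics K X" and lim: "(X \<longlongrightarrow> P) at_top"
  shows "rate K P = P" "0 \<le> P" "P \<le> 1"
    and "\<And>b. real K / real N \<le> b \<Longrightarrow> rate K b < b \<Longrightarrow> P \<le> b"
    and "\<And>b. b \<le> real K / real N \<Longrightarrow> b < rate K b \<Longrightarrow> b \<le> P"
proof -
  let ?G = "\<lambda>x. rate K x - x"
  have ode: "\<And>t. t \<ge> 0 \<Longrightarrow> (X has_real_derivative ?G (X t)) (at t within {0..})"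
    and X0: "X 0 = real K / real N"
    using X by (auto simp: mean_dynamics_def)
  have "?G P = 0"
    using autonomous_ode_limit_equilibrium[OF ode lim] isCont_rate[OF K] by simp
  then show fixed: "rate K P = P" by simp
  show "0 \<le> P" "P \<le> 1" using rate_bounds[OF K, of P] nonneg fixed by auto
  show "P \<le> b" if "real K / real N \<le> b" "rate K b < b" for b
  proof (rule tendsto_upperbound[OF lim])
    show "\<forall>\<^sub>F t in at_top. X t \<le> b"
      using autonomous_ode_upper_barrier[OF ode] that X0
      by (auto simp: eventually_at_top_linorder)
  qed simp
  show "b \<le> P" if "b \<le> real K / real N" "b < rate K b" for b
  proof (rule tendsto_lowerbound[OF lim])
    show "\<forall>\<^sub>F t in at_top. b \<le> X t"
      using autonomous_ode_lower_barrier[OF ode] that X0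
      by (auto simp: eventually_at_top_linorder)
  qed simp
qed

lemma mean_dynamics_limit_Suc_le:
  assumes K: "1 \<le> K" "K + 1 < N"
    and X: "mean_dynamics K X" "(X \<longlongrightarrow> P) at_top"
    and Y: "mean_dynamics (K + 1) Y" "(Y \<longlongrightarrow> P') at_top"
  shows "P' \<le> P"
proof (rule ccontr)
  assume "\<not> P' \<le> P"
  then have "P < P'" by simp
  define a a' where "a = real K / real N" and "a' = real (K + 1) / real N"
  have K': "K < N" "1 \<le> K + 1" using K by auto
  note x = mean_dynamics_limit[OF K(1) K'(1) X, folded a_def]
  note y = mean_dynamics_limit[OF K'(2) K(2) Y, folded a'_def]
  have a: "0 < a" "a < a'" "a' < 1" using K by (auto simp: a_def a'_def divide_simps)
  have rate_a: "rate K a = uniform_rate" "rate (K + 1) a' = uniform_rate"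
    unfolding a_def a'_def by (rule rate_uniform[OF K(1) K'(1)], rule rate_uniform[OF K'(2) K(2)])
  have cross: "uniform_rate \<le> P \<longleftrightarrow> a \<le> P"
    using uniform_rate_le_rate_iff[OF K(1) K'(1) x(2,3)] x(1) by (simp add: a_def)
  have cross': "uniform_rate \<le> P' \<longleftrightarrow> a' \<le> P'"
    using uniform_rate_le_rate_iff[OF K'(2) K(2) y(2,3)] y(1) by (simp add: a'_def)
  have less: "rate (K + 1) z < rate K z" if "0 < z" "z < 1" for z
    using rate_Suc_less[OF K that] .
  \<comment> \<open>In each case one limit is trapped by a barrier on the wrong side of the other.\<close>
  show False
  proof (cases "a \<le> P")
    case True
    then have "uniform_rate \<le> P" using cross by simp
    show False
    proof (cases "a' \<le> P")
      case True
      then have "rate (K + 1) P < P" using less[of P] x(1) a \<open>P < P'\<close> y(3) by linarith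
      then show False using y(4) True \<open>P < P'\<close> by fastforce
    next
      case False
      then have below: "rate (K + 1) a' < a'" using rate_a \<open>uniform_rate \<le> P\<close> by linarith
      then have "P' \<le> a'" "P' \<noteq> a'" using y(1,4) rate_a by auto
      then have "P' < uniform_rate" using cross' by linarith
      then show False using \<open>uniform_rate \<le> P\<close> \<open>P < P'\<close> by linarith
    qed
  next
    case False
    have "uniform_rate \<le> a"
    proof (rule ccontr)
      assume "\<not> uniform_rate \<le> a"
      then show False using x(5)[of a] rate_a False by simp
    qed
    show False
    proof (cases "P' \<le> a")
      case True
      then have "P' < rate K P'" using less[of P'] y(1) a \<open>P < P'\<close> x(2) by linarith
      then show False using x(5) True \<open>P < P'\<close> by fastforce
    next
      case False
      then have "a' \<le> P'" using cross' \<open>uniform_rate \<le> a\<close> by linarith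
      moreover have "rate (K + 1) a' < a'" using rate_a \<open>uniform_rate \<le> a\<close> a by linarith
      ultimately show False using y(1) y(4)[of a'] rate_a by fastforce
    qed
  qed
qed

end

lemma click_model_signal_coeffs:
  assumes "0 < p" "p < 1" "0 \<le> s" "s \<le> 1" "0 < g" "g < 1"
  shows "click_model (p * s) (p * (1 - s)) ((1 - p) * s) g"
proof
  show "0 < p * (1 - s) + (1 - p) * s"
    using assms by (cases "s = 0") (auto intro: add_nonneg_pos)
  have "(1 - p) * s \<le> 1 - p" using assms by (simp add: mult_left_le)
  then show "p * s + p * (1 - s) + (1 - p) * s \<le> 1" by (simp add: algebra_simps)
qed (use assms in auto)

lemma interim_limit_Suc_le:
  fixes X :: "nat \<Rightarrow> real \<Rightarrow> real" and Plim :: "nat \<Rightarrow> real"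
  assumes p: "0 < p" "p < 1" and mu: "0 \<le> mu" "mu \<le> 1" and g: "0 < g" "g < 1"
    and sol: "\<And>K. 1 \<le> K \<Longrightarrow> K \<le> M - 1 \<Longrightarrow> mean_dyn_solution M p mu g 1 K (X K)"
    and lim: "\<And>K. 1 \<le> K \<Longrightarrow> K \<le> M - 1 \<Longrightarrow> (X K \<longlongrightarrow> Plim K) at_top"
    and L: "1 \<le> L" "L + 1 < M" and same_regime: "2 * L < M \<longleftrightarrow> 2 * (L + 1) < M"
  shows "Plim (L + 1) \<le> Plim L"
proof -
  define s where "s = (if 2 * L < M then 1 - mu else mu)"
  interpret click_model "p * s" "p * (1 - s)" "(1 - p) * s" g M
    by (rule click_model_signal_coeffs) (use p mu g in \<open>auto simp: s_def\<close>)
  have "mean_dyn_solution M p mu g 1 K Y \<longleftrightarrow> mean_dynamics K Y"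
    if "2 * K < M \<longleftrightarrow> 2 * L < M" for K Y
    unfolding mean_dyn_solution_def mean_dynamics_def theta_alpha_one
    by (simp only: that s_def[symmetric] Let_def)
  then have "mean_dynamics L (X L)" "mean_dynamics (L + 1) (X (L + 1))"
    using sol[of L] sol[of "L + 1"] L same_regime by auto
  with lim[of L] lim[of "L + 1"] L show ?thesis
    by (auto intro: mean_dynamics_limit_Suc_le)
qed

theorem proposition1:
  fixes M :: nat and p q mu gamma :: real
    and X :: "nat \<Rightarrow> real \<Rightarrow> real" and Plim :: "nat \<Rightarrow> real"
  assumes M3: "M \<ge> 3" and Modd: "odd M"
    and p: "1/2 < p" "p < 1"
    and q: "1/2 < q" "q < 1"
    and mu: "1/2 < mu" "mu \<le> 1"
    and muq: "mu * q > p"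
    and gamma: "0 < gamma" "gamma < 1"
    and sol: "\<And>L. 1 \<le> L \<Longrightarrow> L \<le> M - 1 \<Longrightarrow> mean_dyn_solution M p mu gamma 1 L (X L)"
    and lim: "\<And>L. 1 \<le> L \<Longrightarrow> L \<le> M - 1 \<Longrightarrow> ((X L) \<longlongrightarrow> Plim L) at_top"
    and j: "1 \<le> j" "j \<le> M - 2" "2 * j \<noteq> M - 1"
  shows "interim_eff M Plim (j + 1) \<le> interim_eff M Plim j
         \<and> 1 - interim_eff M Plim (M - (j + 1)) \<le> 1 - interim_eff M Plim (M - j)"
proof -
  have p': "0 < p" "p < 1" and mu': "0 \<le> mu" "mu \<le> 1" using p mu by auto
  define k where "k = M - (j + 1)"
  have k: "1 \<le> k" "k + 1 < M" "M - j = k + 1" and j': "j + 1 < M"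
    using j M3 by (auto simp: k_def)
  \<comment> \<open>Oddness of \<open>M\<close> and \<open>2 j \<noteq> M - 1\<close> keep \<open>j, j + 1\<close> and \<open>k, k + 1\<close> in one regime.\<close>
  have "2 * j < M \<longleftrightarrow> 2 * (j + 1) < M" "2 * k < M \<longleftrightarrow> 2 * (k + 1) < M"
    using j M3 Modd unfolding k_def by presburger+
  then have "Plim (j + 1) \<le> Plim j" "Plim (k + 1) \<le> Plim k"
    using interim_limit_Suc_le[OF p' mu' gamma sol lim] j(1) j' k(1,2) by blast+
  then show ?thesis
    unfolding k(3) k_def[symmetric] interim_eff_def using j(1) j' k by simp
qed

end
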